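(* Let $\gamma \in (\tfrac12, 1)$, $\mu_1,\mu_2 \in \mathbb{R}$, $\sigma_1,\sigma_2>0$, $\beta>0$, $\rho \in (\tfrac12,1)$ and $\Delta p \in \mathbb{R}$. Let $(X,Y)$ be a random pair with $P(Y=+1)=\gamma$, $P(Y=-1)=1-\gamma$, and conditional distributions $X \mid Y=-1 \sim \mathcal{N}(\mu_1,\sigma_1^2)$, $X \mid Y=+1 \sim \mathcal{N}(\mu_2,\sigma_2^2)$. Define the confidence score $$s(x) = \frac{1}{1+\exp\!\left(-\beta\left((x-\Delta p) - \frac{\mu_1+\mu_2}{2}\right)\right)},$$ and the pseudo-label $Y_{psl}$ by: $Y_{psl}=+1$ if $s(X)>\rho$, $Y_{psl}=-1$ if $s(X)<1-\rho$, and $Y_{psl}=0$ if $1-\rho \le s(X) \le \rho$. Then, with $\Phi$ the cumulative distribution function of the standard normal distribution, $$P(Y_{psl}=1) = \gamma\, \Phi\!\left(\frac{\frac{\mu_2-\mu_1}{2} - \frac{1}{\beta}\log\frac{\rho}{1-\rho} - \Delta p}{\sigma_2}\right) + (1-\gamma)\, \Phi\!\left(\frac{\frac{\mu_1-\mu_2}{2} - \frac{1}{\beta}\log\frac{\rho}{1-\rho} - \Delta p}{\sigma_1}\right),$$ $$P(Y_{psl}=-1) = (1-\gamma)\, \Phi\!\left(\frac{\frac{\mu_2-\mu_1}{2} - \frac{1}{\beta}\log\frac{\rho}{1-\rho} + \Delta p}{\sigma_1}\right) + \gamma\, \Phi\!\left(\frac{\frac{\mu_1-\mu_2}{2} - \frac{1}{\beta}\log\frac{\rho}{1-\rho}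 + \Delta p}{\sigma_2}\right),$$ $$P(Y_{psl}=0) = 1 - P(Y_{psl}=1) - P(Y_{psl}=-1).$$
   Context: This models pseudo-labeling in a binary semi-supervised classification problem: $\gamma$ is the proportion of the positive class in the unlabeled data, $\Delta p$ is a logit-adjustment amount, $\beta$ reflects the sharpness (confidence) of the classifier, and $\rho$ is a fixed confidence threshold; a pseudo-label of $0$ means the sample is masked (no pseudo-label assigned). *)

theory Defs
  imports "HOL-Probability.Probability"
begin

definition std_normal_cdf :: "real \<Rightarrow> real" where
  "std_normal_cdf x = measure (density lborel std_normal_density) {..x}"

(* Normal distribution N(mu, sigma^2) as a measure on the reals (sigma is the std. deviation) *)
definition normal_measure :: "real \<Rightarrow> real \<Rightarrow> real measure" where
  "normal_measure mu sd = density lborel (normal_density mu sd)"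

definition conf_score :: "real \<Rightarrow> real \<Rightarrow> real \<Rightarrow> real \<Rightarrow> real \<Rightarrow> real" where
  "conf_score \<beta> \<Delta>p \<mu>1 \<mu>2 x = 1 / (1 + exp (- \<beta> * ((x - \<Delta>p) - (\<mu>1 + \<mu>2) / 2)))"

definition pseudo_label :: "real \<Rightarrow> real \<Rightarrow> real \<Rightarrow> real \<Rightarrow> real \<Rightarrow> real \<Rightarrow> int" where
  "pseudo_label \<beta> \<Delta>p \<mu>1 \<mu>2 \<rho> x =
     (if conf_score \<beta> \<Delta>p \<mu>1 \<mu>2 x > \<rho> then 1
      else if conf_score \<beta> \<Delta>p \<mu>1 \<mu>2 x < 1 - \<rho> then -1
      else 0)"

end

theory Submission
  imports Defs
begin

text \<open>The score is a logistic function of \<open>X\<close>, hence strictly increasing, so the events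
\<open>s(X) > \<rho>\<close> and \<open>s(X) < 1 - \<rho>\<close> are the tails \<open>X > t_hi\<close> and \<open>X < t_lo\<close> for the thresholds
\<open>t_hi, t_lo = \<Delta>p + (\<mu>1 + \<mu>2) / 2 \<plusminus> ln (\<rho> / (1 - \<rho>)) / \<beta>\<close>; since \<open>\<rho> > 1/2\<close> these tails are
disjoint. By total probability over \<open>Y\<close> the law of \<open>X\<close> is the mixture
\<open>\<gamma> N(\<mu>2, \<sigma>2\<^sup>2) + (1 - \<gamma>) N(\<mu>1, \<sigma>1\<^sup>2)\<close>, and a tail of a normal law is a value of \<open>\<Phi>\<close> after
standardisation; strict and non-strict tails agree because the normal law has no atoms.\<close>

lemma logistic_less_iff:
  fixes z r :: real
  assumes "0 < r" "r < 1"
  shows "1 / (1 + exp (- z)) < r \<longleftrightarrow> z < ln (r / (1 - r))"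
proof -
  have "0 < 1 + exp z" by (simp add: add_pos_pos)
  then have "1 / (1 + exp (- z)) < r \<longleftrightarrow> exp z < r / (1 - r)"
    using assms by (simp add: exp_minus field_simps)
  also have "\<dots> \<longleftrightarrow> z < ln (r / (1 - r))"
    using assms by (metis divide_pos_pos diff_gt_0_iff_gt exp_less_cancel_iff exp_ln)
  finally show ?thesis .
qed

lemma logistic_greater_iff:
  fixes z r :: real
  assumes "0 < r" "r < 1"
  shows "r < 1 / (1 + exp (- z)) \<longleftrightarrow> ln (r / (1 - r)) < z"
proof -
  have "0 < 1 + exp z" by (simp add: add_pos_pos)
  then have "r < 1 / (1 + exp (- z)) \<longleftrightarrow> r / (1 - r) < exp z"
    using assms by (simp add: exp_minus field_simps)
  also have "\<dots> \<longleftrightarrow> ln (r / (1 - r)) < z"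
    using assms by (metis divide_pos_pos diff_gt_0_iff_gt exp_less_cancel_iff exp_ln)
  finally show ?thesis .
qed

lemma conf_score_eq_logistic:
  "conf_score \<beta> \<Delta>p \<mu>1 \<mu>2 x = 1 / (1 + exp (- (\<beta> * (x - (\<Delta>p + (\<mu>1 + \<mu>2) / 2)))))"
  by (simp add: conf_score_def diff_diff_eq)

lemma conf_score_greater_iff:
  assumes "\<beta> > 0" "0 < \<rho>" "\<rho> < 1"
  shows "\<rho> < conf_score \<beta> \<Delta>p \<mu>1 \<mu>2 x \<longleftrightarrow> \<Delta>p + (\<mu>1 + \<mu>2) / 2 + ln (\<rho> / (1 - \<rho>)) / \<beta> < x"
proof -
  have "\<rho> < conf_score \<beta> \<Delta>p \<mu>1 \<mu>2 x \<longleftrightarrow>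
      ln (\<rho> / (1 - \<rho>)) < \<beta> * (x - (\<Delta>p + (\<mu>1 + \<mu>2) / 2))"
    unfolding conf_score_eq_logistic logistic_greater_iff[OF assms(2,3)] ..
  also have "\<dots> \<longleftrightarrow> ln (\<rho> / (1 - \<rho>)) / \<beta> < x - (\<Delta>p + (\<mu>1 + \<mu>2) / 2)"
    using assms(1) by (simp add: pos_divide_less_eq mult.commute)
  finally show ?thesis by linarith
qed

lemma conf_score_less_one_minus_iff:
  assumes "\<beta> > 0" "0 < \<rho>" "\<rho> < 1"
  shows "conf_score \<beta> \<Delta>p \<mu>1 \<mu>2 x < 1 - \<rho> \<longleftrightarrow> x < \<Delta>p + (\<mu>1 + \<mu>2) / 2 - ln (\<rho> / (1 - \<rho>)) / \<beta>"
proof -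
  have "conf_score \<beta> \<Delta>p \<mu>1 \<mu>2 x < 1 - \<rho> \<longleftrightarrow>
      \<beta> * (x - (\<Delta>p + (\<mu>1 + \<mu>2) / 2)) < ln ((1 - \<rho>) / (1 - (1 - \<rho>)))"
    unfolding conf_score_eq_logistic using assms by (intro logistic_less_iff) auto
  also have "ln ((1 - \<rho>) / (1 - (1 - \<rho>))) = - ln (\<rho> / (1 - \<rho>))"
    using assms by (simp add: ln_div)
  also have "\<beta> * (x - (\<Delta>p + (\<mu>1 + \<mu>2) / 2)) < - ln (\<rho> / (1 - \<rho>)) \<longleftrightarrow>
      x - (\<Delta>p + (\<mu>1 + \<mu>2) / 2) < - ln (\<rho> / (1 - \<rho>)) / \<beta>"
    using assms(1) by (metis mult.commute pos_less_divide_eq)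
  finally show ?thesis by linarith
qed

lemma borel_measurable_conf_score [measurable]:
  "conf_score \<beta> \<Delta>p \<mu>1 \<mu>2 \<in> borel_measurable borel"
  unfolding conf_score_def by measurable

lemma measurable_pseudo_label [measurable]:
  "pseudo_label \<beta> \<Delta>p \<mu>1 \<mu>2 \<rho> \<in> borel \<rightarrow>\<^sub>M count_space UNIV"
  unfolding pseudo_label_def by measurable

lemma pseudo_label_eq_1_iff:
  assumes "\<beta> > 0" "0 < \<rho>" "\<rho> < 1"
  shows "pseudo_label \<beta> \<Delta>p \<mu>1 \<mu>2 \<rho> x = 1 \<longleftrightarrow> \<Delta>p + (\<mu>1 + \<mu>2) / 2 + ln (\<rho> / (1 - \<rho>)) / \<beta> < x"
  using conf_score_greater_iff[OF assms] by (simp add: pseudo_label_def)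

lemma pseudo_label_eq_minus_1_iff:
  assumes "\<beta> > 0" "1 / 2 \<le> \<rho>" "\<rho> < 1"
  shows "pseudo_label \<beta> \<Delta>p \<mu>1 \<mu>2 \<rho> x = -1 \<longleftrightarrow> x < \<Delta>p + (\<mu>1 + \<mu>2) / 2 - ln (\<rho> / (1 - \<rho>)) / \<beta>"
proof -
  have "1 \<le> \<rho> / (1 - \<rho>)" using assms by (simp add: field_simps)
  then have "0 \<le> ln (\<rho> / (1 - \<rho>)) / \<beta>" using assms(1) by simp
  then have "x < \<Delta>p + (\<mu>1 + \<mu>2) / 2 - ln (\<rho> / (1 - \<rho>)) / \<beta> \<Longrightarrow>
      \<not> \<Delta>p + (\<mu>1 + \<mu>2) / 2 + ln (\<rho> / (1 - \<rho>)) / \<beta> < x"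
    by linarith
  with assms show ?thesis
    by (auto simp: pseudo_label_def conf_score_greater_iff conf_score_less_one_minus_iff)
qed

lemma measure_density_lborel_singleton:
  assumes "f \<in> borel_measurable lborel"
  shows "measure (density lborel f) {c :: 'a :: euclidean_space} = 0"
proof -
  have "{c} \<in> null_sets lborel" by (simp add: finite_imp_null_set_lborel)
  then have "{c} \<in> null_sets (density lborel f)"
    using absolutely_continuousI_density[OF assms] unfolding absolutely_continuous_def by blast
  then show ?thesis by (simp add: measure_def null_setsD1)
qed

lemma std_normal_cdf_eq_measure_lessThan:
  "std_normal_cdf c = measure (density lborel std_normal_density) {..<c}"
proof -
  interpret prob_space "density lborel std_normal_density"
    using prob_space_normal_density[of 1 0] by simp
  have "prob ({..<c} \<union> {c}) = prob {..<c} + prob {c}"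
    by (rule finite_measure_Union) auto
  moreover have "{..<c} \<union> {c} = {..c}" by auto
  ultimately show ?thesis
    by (simp add: std_normal_cdf_def measure_density_lborel_singleton)
qed

lemma normal_measure_eq_distr_std_normal:
  assumes "\<sigma> > 0" "\<bar>a\<bar> = \<sigma>"
  shows "normal_measure \<mu> \<sigma> = distr (density lborel std_normal_density) lborel (\<lambda>x. \<mu> + a * x)"
proof -
  interpret prob_space "density lborel std_normal_density"
    using prob_space_normal_density[of 1 0] by simp
  have "distributed (density lborel std_normal_density) lborel (\<lambda>x. x) std_normal_density"
    by (simp add: distributed_def distr_id2)
  from normal_density_affine[OF this, of a \<mu>] assms
  show ?thesis by (simp add: distributed_def normal_measure_def)
qed

lemma measure_normal_greaterThan:
  assumes "\<sigma> > 0"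
  shows "measure (normal_measure \<mu> \<sigma>) {t<..} = std_normal_cdf ((\<mu> - t) / \<sigma>)"
proof -
  have "(\<lambda>x. \<mu> + (- \<sigma>) * x) -` {t<..} = {..<(\<mu> - t) / \<sigma>}"
    using assms by (auto simp: field_simps)
  then show ?thesis
    using assms by (simp add: normal_measure_eq_distr_std_normal[of \<sigma> "- \<sigma>"] measure_distr
        std_normal_cdf_eq_measure_lessThan)
qed

lemma measure_normal_lessThan:
  assumes "\<sigma> > 0"
  shows "measure (normal_measure \<mu> \<sigma>) {..<t} = std_normal_cdf ((t - \<mu>) / \<sigma>)"
proof -
  have "(\<lambda>x. \<mu> + \<sigma> * x) -` {..<t} = {..<(t - \<mu>) / \<sigma>}"
    using assms by (auto simp: field_simps)
  then show ?thesis
    using assms by (simp add: normal_measure_eq_distr_std_normal[of \<sigma> \<sigma>] measure_distr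
        std_normal_cdf_eq_measure_lessThan)
qed

lemma (in prob_space) prob_eq_Int_add_Int:
  assumes "B1 \<in> events" "B2 \<in> events" "B1 \<inter> B2 = {}" "prob B1 + prob B2 = 1" "E \<in> events"
  shows "prob E = prob (E \<inter> B1) + prob (E \<inter> B2)"
proof -
  have "prob (B1 \<union> B2) = 1"
    using assms by (simp add: finite_measure_Union)
  then have "AE w in M. w \<in> B1 \<union> B2"
    by (rule AE_prob_1)
  then have "prob E = prob (E \<inter> B1 \<union> E \<inter> B2)"
    by (intro measure_eq_AE) (use assms in auto)
  also have "\<dots> = prob (E \<inter> B1) + prob (E \<inter> B2)"
    using assms by (intro finite_measure_Union) auto
  finally show ?thesis .
qed

lemma (in prob_space) prob_eq_0_if_range_ternary:
  fixes f :: "'a \<Rightarrow> int"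
  assumes "f \<in> measurable M (count_space UNIV)" "\<And>w. w \<in> space M \<Longrightarrow> f w \<in> {-1, 0, 1}"
  shows "prob {w \<in> space M. f w = 0} = 1 - prob {w \<in> space M. f w = 1} - prob {w \<in> space M. f w = -1}"
proof -
  note [measurable] = assms(1)
  have "{w \<in> space M. f w = 0} = space M - ({w \<in> space M. f w = 1} \<union> {w \<in> space M. f w = -1})"
    using assms(2) by auto
  moreover have "prob ({w \<in> space M. f w = 1} \<union> {w \<in> space M. f w = -1}) =
      prob {w \<in> space M. f w = 1} + prob {w \<in> space M. f w = -1}"
    by (intro finite_measure_Union) auto
  ultimately show ?thesis
    by (simp add: prob_compl)
qed

lemma (in prob_space) prob_eq_mixture:
  assumes "X \<in> measurable M N" "Y \<in> measurable M (count_space UNIV)" "a \<noteq> b" "A \<in> sets N"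
    and "prob {w \<in> space M. Y w = a} + prob {w \<in> space M. Y w = b} = 1"
    and "prob {w \<in> space M. Y w = a} \<noteq> 0" "prob {w \<in> space M. Y w = b} \<noteq> 0"
    and "prob {w \<in> space M. X w \<in> A \<and> Y w = a} / prob {w \<in> space M. Y w = a} = p"
    and "prob {w \<in> space M. X w \<in> A \<and> Y w = b} / prob {w \<in> space M. Y w = b} = q"
  shows "prob {w \<in> space M. X w \<in> A} =
    prob {w \<in> space M. Y w = a} * p + prob {w \<in> space M. Y w = b} * q"
proof -
  note [measurable] = assms(1,2,4)
  have "prob {w \<in> space M. X w \<in> A} =
      prob ({w \<in> space M. X w \<in> A} \<inter> {w \<in> space M. Y w = a}) +
      prob ({w \<in> space M. X w \<in> A} \<inter> {w \<in> space M. Y w = b})"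
    using assms(3,5) by (intro prob_eq_Int_add_Int) auto
  also have "{w \<in> space M. X w \<in> A} \<inter> {w \<in> space M. Y w = a} =
      {w \<in> space M. X w \<in> A \<and> Y w = a}"
    by blast
  also have "{w \<in> space M. X w \<in> A} \<inter> {w \<in> space M. Y w = b} =
      {w \<in> space M. X w \<in> A \<and> Y w = b}"
    by blast
  finally show ?thesis
    using assms(6-9) by (simp add: field_simps)
qed

theorem theorem0p1:
  fixes M :: "'a measure" and X :: "'a \<Rightarrow> real" and Y :: "'a \<Rightarrow> int"
    and \<gamma> \<mu>1 \<mu>2 \<sigma>1 \<sigma>2 \<beta> \<rho> \<Delta>p :: real
  assumes "prob_space M"
    and "\<gamma> \<in> {1/2<..<1}" and "\<sigma>1 > 0" and "\<sigma>2 > 0" and "\<beta> > 0" and "\<rho> \<in> {1/2<..<1}"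
    and "X \<in> borel_measurable M" and "Y \<in> measurable M (count_space UNIV)"
    and "measure M {w \<in> space M. Y w = 1} = \<gamma>"
    and "measure M {w \<in> space M. Y w = -1} = 1 - \<gamma>"
    and "\<And>A. A \<in> sets borel \<Longrightarrow>
           measure M {w \<in> space M. X w \<in> A \<and> Y w = -1} / measure M {w \<in> space M. Y w = -1}
             = measure (normal_measure \<mu>1 \<sigma>1) A"
    and "\<And>A. A \<in> sets borel \<Longrightarrow>
           measure M {w \<in> space M. X w \<in> A \<and> Y w = 1} / measure M {w \<in> space M. Y w = 1}
             = measure (normal_measure \<mu>2 \<sigma>2) A"
  defines "Ypsl \<equiv> \<lambda>w. pseudo_label \<beta> \<Delta>p \<mu>1 \<mu>2 \<rho> (X w)"
  shows "(measure M {w \<in> space M. Ypsl w = 1} =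
           \<gamma> * std_normal_cdf (((\<mu>2 - \<mu>1) / 2 - (1 / \<beta>) * ln (\<rho> / (1 - \<rho>)) - \<Delta>p) / \<sigma>2)
           + (1 - \<gamma>) * std_normal_cdf (((\<mu>1 - \<mu>2) / 2 - (1 / \<beta>) * ln (\<rho> / (1 - \<rho>)) - \<Delta>p) / \<sigma>1)) \<and>
         (measure M {w \<in> space M. Ypsl w = -1} =
           (1 - \<gamma>) * std_normal_cdf (((\<mu>2 - \<mu>1) / 2 - (1 / \<beta>) * ln (\<rho> / (1 - \<rho>)) + \<Delta>p) / \<sigma>1)
           + \<gamma> * std_normal_cdf (((\<mu>1 - \<mu>2) / 2 - (1 / \<beta>) * ln (\<rho> / (1 - \<rho>)) + \<Delta>p) / \<sigma>2)) \<and>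
         (measure M {w \<in> space M. Ypsl w = 0} =
           1 - measure M {w \<in> space M. Ypsl w = 1} - measure M {w \<in> space M. Ypsl w = -1})"
proof -
  interpret prob_space M by fact
  note [measurable] = assms(7,8)
  define t_hi where "t_hi = \<Delta>p + (\<mu>1 + \<mu>2) / 2 + ln (\<rho> / (1 - \<rho>)) / \<beta>"
  define t_lo where "t_lo = \<Delta>p + (\<mu>1 + \<mu>2) / 2 - ln (\<rho> / (1 - \<rho>)) / \<beta>"
  have \<rho>: "1 / 2 \<le> \<rho>" "0 < \<rho>" "\<rho> < 1" and \<gamma>: "0 < \<gamma>" "\<gamma> < 1"
    using assms(2,6) by auto
  have law_X: "prob {w \<in> space M. X w \<in> A} =
      \<gamma> * measure (normal_measure \<mu>2 \<sigma>2) A + (1 - \<gamma>) * measure (normal_measure \<mu>1 \<sigma>1) A"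
    if "A \<in> sets borel" for A
    using prob_eq_mixture[of X borel Y 1 "-1" A] assms(7-12) \<gamma> that by simp
  have "{w \<in> space M. Ypsl w = 1} = {w \<in> space M. X w \<in> {t_hi<..}}"
    using pseudo_label_eq_1_iff[OF assms(5) \<rho>(2,3)] by (auto simp: Ypsl_def t_hi_def)
  then have upper: "prob {w \<in> space M. Ypsl w = 1} =
      \<gamma> * std_normal_cdf ((\<mu>2 - t_hi) / \<sigma>2) + (1 - \<gamma>) * std_normal_cdf ((\<mu>1 - t_hi) / \<sigma>1)"
    using law_X[of "{t_hi<..}"] assms(3,4) by (simp add: measure_normal_greaterThan)
  have "{w \<in> space M. Ypsl w = -1} = {w \<in> space M. X w \<in> {..<t_lo}}"
    using pseudo_label_eq_minus_1_iff[OF assms(5) \<rho>(1,3)] by (auto simp: Ypsl_def t_lo_def)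
  then have lower: "prob {w \<in> space M. Ypsl w = -1} =
      \<gamma> * std_normal_cdf ((t_lo - \<mu>2) / \<sigma>2) + (1 - \<gamma>) * std_normal_cdf ((t_lo - \<mu>1) / \<sigma>1)"
    using law_X[of "{..<t_lo}"] assms(3,4) by (simp add: measure_normal_lessThan)
  have "Ypsl \<in> measurable M (count_space UNIV)"
    unfolding Ypsl_def by measurable
  then have masked: "prob {w \<in> space M. Ypsl w = 0} =
      1 - prob {w \<in> space M. Ypsl w = 1} - prob {w \<in> space M. Ypsl w = -1}"
    by (rule prob_eq_0_if_range_ternary) (simp add: Ypsl_def pseudo_label_def)
  have "\<mu>2 - t_hi = (\<mu>2 - \<mu>1) / 2 - (1 / \<beta>) * ln (\<rho> / (1 - \<rho>)) - \<Delta>p"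
    "\<mu>1 - t_hi = (\<mu>1 - \<mu>2) / 2 - (1 / \<beta>) * ln (\<rho> / (1 - \<rho>)) - \<Delta>p"
    "t_lo - \<mu>1 = (\<mu>2 - \<mu>1) / 2 - (1 / \<beta>) * ln (\<rho> / (1 - \<rho>)) + \<Delta>p"
    "t_lo - \<mu>2 = (\<mu>1 - \<mu>2) / 2 - (1 / \<beta>) * ln (\<rho> / (1 - \<rho>)) + \<Delta>p"
    by (simp_all add: t_hi_def t_lo_def field_simps)
  with upper lower masked show ?thesis
    by (simp only: add.commute)
qed

end
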